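(* In the big-action setting below, assume $n\ge2$. Then: (1) for every $i\in\{1,\dots,n-1\}$, the map $\ell_{i,i+1}:V\to\mathbb F_p$ is $\mathbb F_p$-linear; (2) for every $i\in\{1,\dots,n-1\}$ such that $\ell_{i,i+1}$ is not identically zero, putting $\mathcal L_{i,i+1}(X)=\prod_{y\in\ker\ell_{i,i+1}}(X-y)$, there exists $\lambda_i\in k\setminus\{0\}$ such that $\ell_{i,i+1}(y)=\lambda_i\mathcal L_{i,i+1}(y)$ for all $y\in V$, and $V$ is exactly the set of roots in $k$ of $\lambda_i^p\mathcal L_{i,i+1}^p-\lambda_i\mathcal L_{i,i+1}$.
   Context: Big-action setting. Let $k$ be an algebraically closed field of characteristic $p>0$, $C$ a connected nonsingular projective curve over $k$ of genus $g\ge 2$, and $G$ a finite $p$-subgroup of $\mathrm{Aut}_k(C)$ with $|G|/g>2p/(p-1)$ (a "big action" $(C,G)$). It is known that there is a point $\infty\in C$ such that $G$ equals its own first (wild) ramification group at $\infty$, that $\infty$ is the only ramification point of $C\to C/G\cong\mathbb P^1_k$, that the second lower ramification group $G_2$ of $G$ at $\infty$ is a nontrivial proper subgroup of $G$ equal to the commutator subgroup $D(G)$, and that $C/G_2\cong\mathbb P^1_k$. Assume $G_2\cong(\mathbb Z/p\mathbb Z)^n$ with $n\ge1$. Put $L=k(C)$ and write $L^{G_2}=k(X)$, where $X$ is a coordinate on $C/G_2$ with pole at the image of $\infty$; then $G/G_2$ acts on $k(X)$ by translations $X\mapsto X+y$, $y$ ranging over an $\mathbb F_p$-subspace $V\subset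 k$ of dimension $v$, giving an exact sequence $0\to G_2\to G\to V\to 0$, $\sigma\mapsto\sigma(X)-X$. Let $\wp(Z)=Z^p-Z$. A polynomial in $k[X]$ is called reduced if it is a $k$-linear combination of monomials $X^j$ with $p\nmid j$; every $f\in k[X]$ is congruent modulo $\wp(k[X])$ to a unique reduced polynomial. Let $A=(\wp(L)\cap k[X])/\wp(k[X])$, an $n$-dimensional $\mathbb F_p$-vector space, and for $\bar f\in A$ let $\deg\bar f=\min\{\deg(f+\wp(P)):P\in k[X]\}$. Fix an $\mathbb F_p$-basis $\bar f_1,\dots,\bar f_n$ of $A$ with $m_i:=\deg\bar f_i$ such that (a) $p\nmid m_i$, (b) $m_1\le\dots\le m_n$, (c) for all $(\lambda_1,\dots,\lambda_n)\in\mathbb F_p^n\setminus\{0\}$, $\deg(\sum_i\lambda_i\bar f_i)=\max_i\deg(\lambda_i\bar f_i)$. Let $f_i\in k[X]$ be the reduced representative of $\bar f_i$ (so $\deg f_i=m_i$); then $L=k(X,W_1,\dots,W_n)$ with $W_i^p-W_i=f_i(X)$. For every $y\in V$ and every $i$ one has $f_i(X+y)-f_i(X)\equiv\sum_{j=1}^{i-1}\ell_{j,i}(y)f_j(X)\bmod\wp(k[X])$ for uniquely determined maps $\ell_{j,i}:V\to\mathbb F_p$ (the matrix of $\bar f\mapsto\overline{f(X+y)}$ on $A$ in this basis is upper unitriangular with entries $\ell_{j,i}(y)$). *)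

theory Defs
  imports "HOL-Computational_Algebra.Polynomial"
begin

definition Fp :: "'a::field set" where
  "Fp = range of_nat"

definition alg_closed_field :: "'a::field itself \<Rightarrow> bool" where
  "alg_closed_field _ \<longleftrightarrow> (\<forall>q::'a poly. degree q \<ge> 1 \<longrightarrow> (\<exists>x. poly q x = 0))"

definition wp_poly :: "'a::field poly \<Rightarrow> 'a poly" where
  "wp_poly P = P ^ CHAR('a) - P"

definition cong_wp :: "'a::field poly \<Rightarrow> 'a poly \<Rightarrow> bool" where
  "cong_wp f g \<longleftrightarrow> (\<exists>P. f - g = wp_poly P)"

text \<open>Degree of the class of f in k[X]/wp(k[X]): min deg (f + wp(P)).\<close>
definition deg_bar :: "'a::field poly \<Rightarrow> nat" where
  "deg_bar f = (LEAST d. \<exists>P. degree (f + wp_poly P) = d)"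

definition reduced :: "'a::field poly \<Rightarrow> bool" where
  "reduced f \<longleftrightarrow> (\<forall>j. coeff f j \<noteq> 0 \<longrightarrow> \<not> CHAR('a) dvd j)"

definition Fp_subspace :: "'a::field set \<Rightarrow> bool" where
  "Fp_subspace V \<longleftrightarrow> finite V \<and> 0 \<in> V \<and> (\<forall>y\<in>V. \<forall>z\<in>V. y + z \<in> V)
     \<and> (\<forall>c\<in>Fp. \<forall>y\<in>V. c * y \<in> V)"

definition Fp_linear_on :: "'a::field set \<Rightarrow> ('a \<Rightarrow> 'a) \<Rightarrow> bool" where
  "Fp_linear_on V l \<longleftrightarrow> (\<forall>y\<in>V. \<forall>z\<in>V. l (y + z) = l y + l z)
     \<and> (\<forall>c\<in>Fp. \<forall>y\<in>V. l (c * y) = c * l y)"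

end

theory Submission
  imports Defs "HOL-Computational_Algebra.Primes" "HOL-Number_Theory.Cong"
begin

text \<open>
  Let W_r be the Fp-span of f_1, ..., f_r plus wp(k[X]).
  The translation hypothesis says that translating f_j by y in V changes it by an element
  of W_{j-1}; hence every W_r (r \<le> n) is stable under translation by V.  Writing
  R_y = f_{i+1}(X+y) - f_{i+1} - ell_{i,i+1}(y) f_i, which lies in W_{i-1}, the
  cocycle identity for the composite translation X \<mapsto> X+y+z shows that
  (ell(y+z) - ell(y) - ell(z)) f_i lies in W_{i-1}.  The degree hypothesis forbids a
  nonzero Fp-multiple of f_i in W_{i-1}, so ell_{i,i+1} is additive, hence Fp-linear.

  Part (2) is a general fact about an Fp-linear functional l : V \<rightarrow> Fp with kernel K.
  The vanishing polynomial L of the finite additive group K is additive (an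
  interpolation argument) and hence Fp-linear; a dimension-one argument gives
  l = c L on V, and since Fp is exactly the set of fixed points of Frobenius, V is the
  set of roots of (cL)^p - cL.
\<close>

section \<open>The prime field\<close>

lemma Fp_0 [simp]: "0 \<in> Fp"
  unfolding Fp_def by (metis of_nat_0 rangeI)

lemma Fp_1 [simp]: "1 \<in> Fp"
  unfolding Fp_def by (metis of_nat_1 rangeI)

lemma Fp_add: "a \<in> Fp \<Longrightarrow> b \<in> Fp \<Longrightarrow> a + b \<in> Fp"
  unfolding Fp_def by (auto simp flip: of_nat_add)

lemma Fp_mult: "a \<in> Fp \<Longrightarrow> b \<in> Fp \<Longrightarrow> a * b \<in> Fp"
  unfolding Fp_def by (auto simp flip: of_nat_mult)

lemma Fp_eq_residues:
  assumes "CHAR('a::field) > 0"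
  shows "(Fp :: 'a set) = of_nat ` {..<CHAR('a)}"
proof -
  have "(of_nat k :: 'a) = of_nat (k mod CHAR('a))" for k
    by (simp add: of_nat_eq_iff_cong_CHAR cong_def)
  moreover have "k mod CHAR('a) < CHAR('a)" for k
    using assms by simp
  ultimately show ?thesis
    unfolding Fp_def by blast
qed

lemma card_Fp:
  assumes "CHAR('a::field) > 0"
  shows "card (Fp :: 'a set) = CHAR('a)"
proof -
  have "inj_on (of_nat :: nat \<Rightarrow> 'a) {..<CHAR('a)}"
    by (rule inj_onI) (auto simp: of_nat_eq_iff_cong_CHAR cong_def)
  then show ?thesis
    unfolding Fp_eq_residues[OF assms] by (simp add: card_image)
qed

text \<open>Frobenius fixes the prime field \<dots>\<close>

lemma Fp_frobenius:
  assumes "prime CHAR('a::field)" and "(a::'a) \<in> Fp"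
  shows "a ^ CHAR('a) = a"
proof -
  obtain k where "a = of_nat k"
    using assms(2) unfolding Fp_def by auto
  then have "a = (\<Sum>_\<in>{..<k}. 1)"
    by simp
  then show ?thesis
    using freshmans_dream_sum[OF assms(1) refl, of "\<lambda>_. 1" "{..<k}"] by simp
qed

text \<open>\<dots> and nothing else: X^p - X has at most p roots, and the p elements of Fp are roots.\<close>

lemma Fp_iff_frobenius_fixed:
  assumes cp: "prime CHAR('a::field)"
  shows "(u::'a) \<in> Fp \<longleftrightarrow> u ^ CHAR('a) = u"
proof
  assume "u ^ CHAR('a) = u"
  define p where "p = CHAR('a)"
  have p2: "p \<ge> 2"
    using cp prime_ge_2_nat p_def by blast
  define Q :: "'a poly" where "Q = monom 1 p - [:0, 1:]"
  have "degree Q = p"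
    unfolding Q_def using p2
    by (simp only: diff_conv_add_uminus, subst degree_add_eq_left) (auto simp: degree_monom_eq)
  then have Q0: "Q \<noteq> 0" and deg_Q: "degree Q = p"
    using p2 by auto
  have roots_Q: "{x. poly Q x = 0} = {x::'a. x ^ p = x}"
    unfolding Q_def by (simp add: poly_monom)
  have fin: "finite {x::'a. x ^ p = x}"
    using poly_roots_finite[OF Q0] unfolding roots_Q by simp
  have sub: "Fp \<subseteq> {x::'a. x ^ p = x}"
    using Fp_frobenius[OF cp] unfolding p_def by auto
  have "card (Fp :: 'a set) = p"
    unfolding p_def using cp by (simp add: card_Fp prime_gt_0_nat)
  then have "card {x::'a. x ^ p = x} \<le> card (Fp :: 'a set)"
    using card_poly_roots_bound[OF Q0] deg_Q unfolding roots_Q by simp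
  then have "Fp = {x::'a. x ^ p = x}"
    using card_subset_eq[OF fin sub] card_mono[OF fin sub] by linarith
  then show "u \<in> Fp"
    using \<open>u ^ CHAR('a) = u\<close> unfolding p_def by blast
qed (rule Fp_frobenius[OF cp])

lemma Fp_uminus:
  assumes "prime CHAR('a::field)" and "(a::'a) \<in> Fp"
  shows "- a \<in> Fp"
  using assms minus_power_prime_CHAR[OF refl assms(1), of a]
  by (simp add: Fp_iff_frobenius_fixed)

lemma Fp_diff: "prime CHAR('a::field) \<Longrightarrow> (a::'a) \<in> Fp \<Longrightarrow> b \<in> Fp \<Longrightarrow> a - b \<in> Fp"
  using Fp_add Fp_uminus by (metis diff_conv_add_uminus)

lemma Fp_inverse:
  assumes "prime CHAR('a::field)" and "(a::'a) \<in> Fp"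
  shows "inverse a \<in> Fp"
  using assms by (simp add: Fp_iff_frobenius_fixed power_inverse)

section \<open>The Artin--Schreier operator\<close>

lemma wp_0: "prime CHAR('a::field) \<Longrightarrow> wp_poly (0::'a poly) = 0"
  unfolding wp_poly_def using prime_gt_0_nat by (simp add: power_0_left)

lemma wp_add: "prime CHAR('a::field) \<Longrightarrow> wp_poly (P + Q :: 'a poly) = wp_poly P + wp_poly Q"
  unfolding wp_poly_def using freshmans_dream[where x=P and y=Q] by simp

lemma wp_smult:
  "prime CHAR('a::field) \<Longrightarrow> c \<in> Fp \<Longrightarrow> wp_poly (smult c P :: 'a poly) = smult c (wp_poly P)"
  unfolding wp_poly_def using Fp_frobenius[of c] by (simp add: smult_power smult_diff_right)

lemma pcompose_power: "pcompose (P ^ k) q = (pcompose P q) ^ k"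
  by (induct k) (simp_all add: pcompose_1 pcompose_mult)

lemma wp_pcompose: "pcompose (wp_poly P) q = wp_poly (pcompose P q)"
  unfolding wp_poly_def by (simp add: pcompose_diff pcompose_power)

lemma deg_bar_wp:
  assumes cp: "prime CHAR('a::field)"
  shows "deg_bar (wp_poly (P::'a poly)) = 0"
proof -
  have "degree (wp_poly P + wp_poly (- P)) = 0"
    by (simp add: wp_add[OF cp, symmetric] wp_0[OF cp])
  then show ?thesis
    unfolding deg_bar_def by (metis (mono_tags, lifting) Least_eq_0)
qed

section \<open>The spaces W_r\<close>

text \<open>W_r = (Fp-span of f_1, ..., f_r) + wp(k[X]): the classes of A spanned by the first r
  basis vectors, viewed inside k[X].\<close>

definition span_mod_wp :: "(nat \<Rightarrow> 'a::field poly) \<Rightarrow> nat \<Rightarrow> 'a poly set" where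
  "span_mod_wp f r =
     {g. \<exists>\<mu> P. (\<forall>j. \<mu> j \<in> Fp) \<and> g = (\<Sum>j=1..r. smult (\<mu> j) (f j)) + wp_poly P}"

lemma span_wp: "wp_poly P \<in> span_mod_wp f r"
  unfolding span_mod_wp_def by (rule CollectI, rule exI[of _ "\<lambda>_. 0"], rule exI[of _ P]) simp

lemma smult_sum_right: "smult c (sum g A) = (\<Sum>i\<in>A. smult c (g i))"
  by (induct A rule: infinite_finite_induct) (simp_all add: smult_add_right)

context
  fixes f :: "nat \<Rightarrow> 'a::field poly"
  assumes cp: "prime CHAR('a)"
begin

lemma span_add: "a \<in> span_mod_wp f r \<Longrightarrow> b \<in> span_mod_wp f r \<Longrightarrow> a + b \<in> span_mod_wp f r"
proof -
  assume "a \<in> span_mod_wp f r" "b \<in> span_mod_wp f r"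
  then obtain \<mu> P \<nu> Q
    where \<mu>: "\<forall>j. \<mu> j \<in> Fp" "a = (\<Sum>j=1..r. smult (\<mu> j) (f j)) + wp_poly P"
      and \<nu>: "\<forall>j. \<nu> j \<in> Fp" "b = (\<Sum>j=1..r. smult (\<nu> j) (f j)) + wp_poly Q"
    unfolding span_mod_wp_def by blast
  have "a + b = (\<Sum>j=1..r. smult (\<mu> j + \<nu> j) (f j)) + wp_poly (P + Q)"
    using \<mu> \<nu> by (simp add: wp_add[OF cp] smult_add_left sum.distrib)
  moreover have "\<forall>j. \<mu> j + \<nu> j \<in> Fp"
    using \<mu> \<nu> Fp_add by blast
  ultimately show ?thesis
    unfolding span_mod_wp_def by (intro CollectI exI[of _ "\<lambda>j. \<mu> j + \<nu> j"] exI[of _ "P + Q"]) simp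
qed

lemma span_smult: "c \<in> Fp \<Longrightarrow> a \<in> span_mod_wp f r \<Longrightarrow> smult c a \<in> span_mod_wp f r"
proof -
  assume c: "c \<in> Fp" and "a \<in> span_mod_wp f r"
  then obtain \<mu> P where \<mu>: "\<forall>j. \<mu> j \<in> Fp" "a = (\<Sum>j=1..r. smult (\<mu> j) (f j)) + wp_poly P"
    unfolding span_mod_wp_def by blast
  have "smult c a = (\<Sum>j=1..r. smult (c * \<mu> j) (f j)) + wp_poly (smult c P)"
    using \<mu> c by (simp add: wp_smult[OF cp] smult_add_right smult_sum_right)
  moreover have "\<forall>j. c * \<mu> j \<in> Fp"
    using \<mu> c Fp_mult by blast
  ultimately show ?thesis
    unfolding span_mod_wp_def by (intro CollectI exI[of _ "\<lambda>j. c * \<mu> j"] exI[of _ "smult c P"]) simp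
qed

lemma span_diff: "a \<in> span_mod_wp f r \<Longrightarrow> b \<in> span_mod_wp f r \<Longrightarrow> a - b \<in> span_mod_wp f r"
  using span_add span_smult[of "-1" b r] Fp_uminus[OF cp Fp_1]
  by (metis diff_conv_add_uminus minus_one_mult_self mult_minus1 smult_1_left smult_minus_left)

lemma span_0: "0 \<in> span_mod_wp f r"
  using span_wp[of 0 f r] wp_0[OF cp] by simp

lemma span_sum: "finite A \<Longrightarrow> (\<And>a. a \<in> A \<Longrightarrow> g a \<in> span_mod_wp f r) \<Longrightarrow> sum g A \<in> span_mod_wp f r"
  by (induct A rule: finite_induct) (auto intro: span_add span_0)

lemma span_basis: "1 \<le> j \<Longrightarrow> j \<le> r \<Longrightarrow> f j \<in> span_mod_wp f r"
proof -
  assume j: "1 \<le> j" "j \<le> r"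
  define \<delta> :: "nat \<Rightarrow> 'a" where "\<delta> k = (if k = j then 1 else 0)" for k
  have "(\<Sum>k=1..r. smult (\<delta> k) (f k)) = (\<Sum>k=1..r. if k = j then f k else 0)"
    unfolding \<delta>_def by (rule sum.cong) auto
  also have "\<dots> = f j"
    using j by (subst sum.delta) auto
  finally have "f j = (\<Sum>k=1..r. smult (\<delta> k) (f k)) + wp_poly 0"
    by (simp add: wp_0[OF cp])
  moreover have "\<forall>k. \<delta> k \<in> Fp"
    unfolding \<delta>_def by simp
  ultimately show ?thesis
    unfolding span_mod_wp_def by (intro CollectI exI[of _ \<delta>] exI[of _ 0]) simp
qed

lemma span_mono: "r \<le> r' \<Longrightarrow> span_mod_wp f r \<subseteq> span_mod_wp f r'"
proof
  fix a assume r: "r \<le> r'" and "a \<in> span_mod_wp f r"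
  then obtain \<mu> P where \<mu>: "\<forall>j. \<mu> j \<in> Fp" "a = (\<Sum>j=1..r. smult (\<mu> j) (f j)) + wp_poly P"
    unfolding span_mod_wp_def by blast
  have "(\<Sum>j=1..r. smult (\<mu> j) (f j)) \<in> span_mod_wp f r'"
    using r \<mu> by (intro span_sum span_smult span_basis) auto
  then show "a \<in> span_mod_wp f r'"
    unfolding \<mu>(2) by (intro span_add span_wp)
qed

end

section \<open>Additivity of ell_{i,i+1}\<close>

context
  fixes n :: nat and V :: "'a::field set" and f :: "nat \<Rightarrow> 'a poly"
    and m :: "nat \<Rightarrow> nat" and ell :: "nat \<Rightarrow> nat \<Rightarrow> 'a \<Rightarrow> 'a"
  assumes cp: "prime CHAR('a)"
    and V_sub: "Fp_subspace V"
    and m_ndvd: "\<And>i. i \<in> {1..n} \<Longrightarrow> \<not> CHAR('a) dvd m i"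
    and deg_comb: "\<And>\<mu>. (\<forall>i\<in>{1..n}. \<mu> i \<in> Fp) \<Longrightarrow> (\<exists>i\<in>{1..n}. \<mu> i \<noteq> 0) \<Longrightarrow>
        deg_bar (\<Sum>i=1..n. smult (\<mu> i) (f i)) = Max {m i | i. i \<in> {1..n} \<and> \<mu> i \<noteq> 0}"
    and ell_Fp: "\<And>j i y. y \<in> V \<Longrightarrow> 1 \<le> j \<Longrightarrow> j < i \<Longrightarrow> i \<le> n \<Longrightarrow> ell j i y \<in> Fp"
    and translation: "\<And>y i. y \<in> V \<Longrightarrow> i \<in> {1..n} \<Longrightarrow>
        cong_wp (pcompose (f i) [:y, 1:] - f i) (\<Sum>j=1..<i. smult (ell j i y) (f j))"
begin

text \<open>Linear independence of the basis modulo wp: no nonzero Fp-multiple of f_i lies in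
  W_{i-1}.  Otherwise a nontrivial combination involving f_i would lie in wp(k[X]), so its
  reduced degree would be 0, while the degree hypothesis makes it at least m_i > 0.\<close>

lemma span_excludes_next:
  assumes c: "c \<in> Fp" and i: "1 \<le> i" "i \<le> n"
    and in_span: "smult c (f i) \<in> span_mod_wp f (i - 1)"
  shows "c = 0"
proof (rule ccontr)
  assume c0: "c \<noteq> 0"
  obtain \<mu> P where \<mu>: "\<forall>j. \<mu> j \<in> Fp"
    and eq: "smult c (f i) = (\<Sum>j=1..i-1. smult (\<mu> j) (f j)) + wp_poly P"
    using in_span unfolding span_mod_wp_def by blast
  define \<nu> where "\<nu> j = (if j = i then c else 0) - (if j < i then \<mu> j else 0)" for j
  have \<nu>_Fp: "\<forall>j. \<nu> j \<in> Fp"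
    unfolding \<nu>_def using \<mu> c Fp_diff[OF cp] by auto
  have \<nu>_i: "\<nu> i = c"
    unfolding \<nu>_def by simp
  have "(\<Sum>j=1..n. smult (\<nu> j) (f j))
      = (\<Sum>j=1..n. if j = i then smult c (f j) else 0)
        - (\<Sum>j=1..n. if j < i then smult (\<mu> j) (f j) else 0)"
    unfolding sum_subtractf[symmetric] by (rule sum.cong) (auto simp: \<nu>_def smult_diff_left)
  also have "(\<Sum>j=1..n. if j = i then smult c (f j) else 0) = smult c (f i)"
    using i by (subst sum.delta) auto
  also have "(\<Sum>j=1..n. if j < i then smult (\<mu> j) (f j) else 0)
      = (\<Sum>j\<in>{1..n} \<inter> {..<i}. smult (\<mu> j) (f j))"
    by (subst sum.inter_restrict) (auto simp: lessThan_def)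
  also have "{1..n} \<inter> {..<i} = {1..i-1}"
    using i by auto
  finally have comb_wp: "(\<Sum>j=1..n. smult (\<nu> j) (f j)) = wp_poly P"
    using eq by simp
  have "deg_bar (\<Sum>j=1..n. smult (\<nu> j) (f j)) = Max {m j | j. j \<in> {1..n} \<and> \<nu> j \<noteq> 0}"
    using deg_comb[of \<nu>] \<nu>_Fp \<nu>_i i c0 by (metis atLeastAtMost_iff)
  moreover have "m i \<le> Max {m j | j. j \<in> {1..n} \<and> \<nu> j \<noteq> 0}"
    by (rule Max_ge) (use i c0 \<nu>_i in auto)
  moreover have "m i \<noteq> 0"
    using m_ndvd[of i] i by (metis atLeastAtMost_iff dvd_0_right)
  ultimately show False
    using comb_wp deg_bar_wp[OF cp] by simp
qed

lemma translation_identity: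
  assumes "y \<in> V" "1 \<le> j" "j \<le> n"
  obtains P where "pcompose (f j) [:y, 1:] - f j = (\<Sum>k=1..<j. smult (ell k j y) (f k)) + wp_poly P"
  using translation[of y j] assms unfolding cong_wp_def by (auto simp: algebra_simps)

lemma translate_minus_self_in_span:
  assumes y: "y \<in> V" and j: "1 \<le> j" "j \<le> n"
  shows "pcompose (f j) [:y, 1:] - f j \<in> span_mod_wp f (j - 1)"
proof -
  obtain P where P: "pcompose (f j) [:y, 1:] - f j = (\<Sum>k=1..<j. smult (ell k j y) (f k)) + wp_poly P"
    using translation_identity y j .
  have "(\<Sum>k=1..<j. smult (ell k j y) (f k)) \<in> span_mod_wp f (j - 1)"
    using y j by (intro span_sum[OF cp] span_smult[OF cp] span_basis[OF cp] ell_Fp) auto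
  then show ?thesis
    unfolding P by (intro span_add[OF cp] span_wp)
qed

lemma span_translation_invariant:
  assumes g: "g \<in> span_mod_wp f r" and r: "r \<le> n" and z: "z \<in> V"
  shows "pcompose g [:z, 1:] \<in> span_mod_wp f r"
proof -
  obtain \<mu> P where \<mu>: "\<forall>j. \<mu> j \<in> Fp" and g_eq: "g = (\<Sum>j=1..r. smult (\<mu> j) (f j)) + wp_poly P"
    using g unfolding span_mod_wp_def by blast
  have basis: "pcompose (f j) [:z, 1:] \<in> span_mod_wp f r" if j: "1 \<le> j" "j \<le> r" for j
  proof -
    have "pcompose (f j) [:z, 1:] - f j \<in> span_mod_wp f (j - 1)"
      using translate_minus_self_in_span[OF z] j r by simp
    moreover have "span_mod_wp f (j - 1) \<subseteq> span_mod_wp f r"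
      using span_mono[OF cp] j by simp
    ultimately have "pcompose (f j) [:z, 1:] - f j \<in> span_mod_wp f r"
      by blast
    then have "(pcompose (f j) [:z, 1:] - f j) + f j \<in> span_mod_wp f r"
      using span_basis[OF cp j] by (rule span_add[OF cp])
    then show ?thesis
      by simp
  qed
  have "pcompose g [:z, 1:] = (\<Sum>j=1..r. smult (\<mu> j) (pcompose (f j) [:z, 1:]))
      + wp_poly (pcompose P [:z, 1:])"
    unfolding g_eq by (simp add: pcompose_add pcompose_sum pcompose_smult wp_pcompose)
  also have "\<dots> \<in> span_mod_wp f r"
    using \<mu> basis by (intro span_add[OF cp] span_wp span_sum[OF cp] span_smult[OF cp]) auto
  finally show ?thesis .
qed

lemma next_translation_residue_in_span:
  assumes y: "y \<in> V" and i: "1 \<le> i" "i < n"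
  shows "pcompose (f (i+1)) [:y, 1:] - f (i+1) - smult (ell i (i+1) y) (f i) \<in> span_mod_wp f (i - 1)"
proof -
  obtain P where P: "pcompose (f (i+1)) [:y, 1:] - f (i+1)
      = (\<Sum>k=1..<i+1. smult (ell k (i+1) y) (f k)) + wp_poly P"
    using translation_identity[of y "i+1"] y i by auto
  have "pcompose (f (i+1)) [:y, 1:] - f (i+1) - smult (ell i (i+1) y) (f i)
      = (\<Sum>k=1..<i. smult (ell k (i+1) y) (f k)) + wp_poly P"
    using P i by simp
  moreover have "(\<Sum>k=1..<i. smult (ell k (i+1) y) (f k)) \<in> span_mod_wp f (i - 1)"
    using y i by (intro span_sum[OF cp] span_smult[OF cp] span_basis[OF cp] ell_Fp) auto
  ultimately show ?thesis
    by (simp add: span_add[OF cp] span_wp)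
qed

text \<open>The cocycle argument: translating R_y by z and comparing with R_z and R_{y+z}
  isolates (ell(y+z) - ell(y) - ell(z)) f_i inside W_{i-1}.\<close>

lemma ell_additive:
  assumes i: "1 \<le> i" "i < n" and y: "y \<in> V" and z: "z \<in> V"
  shows "ell i (i+1) (y + z) = ell i (i+1) y + ell i (i+1) z"
proof -
  define T where "T w g = pcompose g [:w, 1:]" for w and g :: "'a poly"
  define R where "R w = T w (f (i+1)) - f (i+1) - smult (ell i (i+1) w) (f i)" for w
  let ?W = "span_mod_wp f (i - 1)"
  have yz: "y + z \<in> V"
    using V_sub y z unfolding Fp_subspace_def by blast
  have T_T: "T z (T y g) = T (y + z) g" for g
    unfolding T_def by (simp add: pcompose_assoc[symmetric] pcompose_pCons add.commute)
  have cocycle: "smult (ell i (i+1) (y + z) - ell i (i+1) y - ell i (i+1) z) (f i)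
      = smult (ell i (i+1) y) (T z (f i) - f i) + T z (R y) + R z - R (y + z)"
    unfolding R_def T_T[symmetric]
    by (simp add: T_def pcompose_diff pcompose_add pcompose_smult algebra_simps
        smult_diff_left smult_add_left smult_diff_right)
  have R_span: "R w \<in> ?W" if "w \<in> V" for w
    using next_translation_residue_in_span[OF that i] unfolding R_def T_def .
  have "smult (ell i (i+1) y) (T z (f i) - f i) \<in> ?W"
    using translate_minus_self_in_span[OF z, of i] ell_Fp[OF y, of i "i+1"] i
    by (intro span_smult[OF cp]) (auto simp: T_def)
  moreover have "T z (R y) \<in> ?W"
    using span_translation_invariant[OF R_span[OF y] _ z] i by (simp add: T_def)
  ultimately have "smult (ell i (i+1) (y + z) - ell i (i+1) y - ell i (i+1) z) (f i) \<in> ?W"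
    unfolding cocycle using R_span[OF z] R_span[OF yz]
    by (intro span_diff[OF cp] span_add[OF cp])
  moreover have "ell i (i+1) (y + z) - ell i (i+1) y - ell i (i+1) z \<in> Fp"
    using i y z yz ell_Fp[of _ i "i+1"] by (intro Fp_diff[OF cp]) auto
  ultimately have "ell i (i+1) (y + z) - ell i (i+1) y - ell i (i+1) z = 0"
    using i by (intro span_excludes_next) auto
  then show ?thesis
    by (simp add: algebra_simps)
qed

end

lemma additive_Fp_homogeneous:
  fixes l :: "'a::field \<Rightarrow> 'a"
  assumes V0: "0 \<in> V" and V_add: "\<And>y z. y \<in> V \<Longrightarrow> z \<in> V \<Longrightarrow> y + z \<in> V"
    and l_add: "\<And>y z. y \<in> V \<Longrightarrow> z \<in> V \<Longrightarrow> l (y + z) = l y + l z"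
    and c: "c \<in> Fp" and y: "y \<in> V"
  shows "l (c * y) = c * l y"
proof -
  have l0: "l 0 = 0"
    using l_add[OF V0 V0] by (metis add.right_neutral add_cancel_right_right)
  have "of_nat k * y \<in> V \<and> l (of_nat k * y) = of_nat k * l y" for k
  proof (induct k)
    case (Suc k)
    have "of_nat (Suc k) * y = y + of_nat k * y"
      by (simp add: algebra_simps)
    with Suc y show ?case
      by (simp add: V_add l_add algebra_simps)
  qed (simp add: V0 l0)
  then show ?thesis
    using c unfolding Fp_def by auto
qed

lemma additive_imp_Fp_linear_on:
  assumes V: "Fp_subspace V" and l_add: "\<And>y z. y \<in> V \<Longrightarrow> z \<in> V \<Longrightarrow> l (y + z) = l y + l z"
  shows "Fp_linear_on V l"
  using V l_add additive_Fp_homogeneous[of V l]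
  unfolding Fp_linear_on_def Fp_subspace_def by blast

section \<open>Vanishing polynomials of finite additive groups\<close>

definition finite_additive_subgroup :: "'a::ab_group_add set \<Rightarrow> bool" where
  "finite_additive_subgroup K \<longleftrightarrow> finite K \<and> 0 \<in> K \<and> (\<forall>a\<in>K. \<forall>b\<in>K. a - b \<in> K)"

definition vanishing_poly :: "'a::field set \<Rightarrow> 'a poly" where
  "vanishing_poly K = (\<Prod>y\<in>K. [:- y, 1:])"

lemma poly_vanishing_poly: "poly (vanishing_poly K) x = (\<Prod>y\<in>K. x - y)"
  unfolding vanishing_poly_def by (simp add: poly_prod)

lemma vanishing_poly_root_iff: "finite K \<Longrightarrow> poly (vanishing_poly K) x = 0 \<longleftrightarrow> x \<in> K"
  unfolding poly_vanishing_poly by simp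

lemma degree_vanishing_poly: "finite K \<Longrightarrow> degree (vanishing_poly K) = card K"
  unfolding vanishing_poly_def by (subst degree_prod_eq_sum_degree) auto

lemma lead_coeff_vanishing_poly: "lead_coeff (vanishing_poly K) = 1"
  unfolding vanishing_poly_def by (simp add: lead_coeff_prod)

text \<open>L is invariant under translation by K, since translation permutes K.\<close>

lemma vanishing_poly_periodic:
  assumes K: "finite_additive_subgroup K" and k: "k \<in> K"
  shows "poly (vanishing_poly K) (x + k) = poly (vanishing_poly K) x"
proof -
  have closed: "a - b \<in> K" "0 - b \<in> K" if "a \<in> K" "b \<in> K" for a b
    using K that unfolding finite_additive_subgroup_def by auto
  have "(\<Prod>y\<in>K. x + k - y) = (\<Prod>y\<in>K. x - y)"
  proof (rule prod.reindex_bij_witness[of K "\<lambda>b. b + k" "\<lambda>a. a - k"])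
    fix b assume "b \<in> K"
    then show "b + k \<in> K"
      using closed[OF _ k] closed[of b "0 - k"] k by fastforce
  qed (use closed k in auto)
  then show ?thesis
    unfolding poly_vanishing_poly .
qed

text \<open>L is additive: for fixed z, L(X + z) and L(X) + L(z) are both monic of degree |K| and
  agree on the |K| points of K, hence coincide.\<close>

lemma vanishing_poly_additive:
  assumes K: "finite_additive_subgroup K"
  shows "poly (vanishing_poly K) (x + z) = poly (vanishing_poly K) x + poly (vanishing_poly K) z"
proof -
  let ?L = "vanishing_poly K"
  have fin: "finite K" and K0: "0 \<in> K"
    using K unfolding finite_additive_subgroup_def by auto
  have card_pos: "card K > 0"
    using fin K0 card_gt_0_iff by blast
  have deg: "degree ?L = card K"
    using degree_vanishing_poly[OF fin] .
  have "pcompose ?L [:z, 1:] = ?L + [:poly ?L z:]"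
  proof (rule poly_eqI_degree_lead_coeff[where n = "card K" and A = K])
    have "coeff (pcompose ?L [:z, 1:]) (card K) = lead_coeff (pcompose ?L [:z, 1:])"
      by (simp add: degree_pcompose deg)
    also have "\<dots> = 1"
      by (subst lead_coeff_comp) (auto simp: lead_coeff_vanishing_poly)
    also have "1 = coeff (?L + [:poly ?L z:]) (card K)"
      using card_pos lead_coeff_vanishing_poly[of K] deg by (simp add: coeff_pCons split: nat.splits)
    finally show "coeff (pcompose ?L [:z, 1:]) (card K) = coeff (?L + [:poly ?L z:]) (card K)" .
    show "degree (pcompose ?L [:z, 1:]) \<le> card K"
      by (simp add: degree_pcompose deg)
    show "degree (?L + [:poly ?L z:]) \<le> card K"
      using degree_add_le[of ?L "card K" "[:poly ?L z:]"] deg by simp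
    fix k assume "k \<in> K"
    then show "poly (pcompose ?L [:z, 1:]) k = poly (?L + [:poly ?L z:]) k"
      using vanishing_poly_periodic[OF K, of k z] vanishing_poly_root_iff[OF fin, of k]
      by (simp add: poly_pcompose add.commute)
  qed simp
  then have "poly (pcompose ?L [:z, 1:]) x = poly (?L + [:poly ?L z:]) x"
    by simp
  then show ?thesis
    by (simp add: poly_pcompose add.commute)
qed

lemma vanishing_poly_diff:
  assumes "finite_additive_subgroup K"
  shows "poly (vanishing_poly K) (x - w) = poly (vanishing_poly K) x - poly (vanishing_poly K) w"
  using vanishing_poly_additive[OF assms, of "x - w" w] by simp

lemma vanishing_poly_Fp_homogeneous:
  assumes "finite_additive_subgroup K" and "c \<in> Fp"
  shows "poly (vanishing_poly K) (c * x) = c * poly (vanishing_poly K) x"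
  using additive_Fp_homogeneous[of UNIV "poly (vanishing_poly K)"] vanishing_poly_additive[OF assms(1)]
    assms(2) by auto

section \<open>Fp-valued linear functionals on a finite Fp-subspace\<close>

context
  fixes V :: "'a::field set" and l :: "'a \<Rightarrow> 'a"
  assumes cp: "prime CHAR('a)" and V_sub: "Fp_subspace V"
    and l_lin: "Fp_linear_on V l" and l_Fp: "\<And>y. y \<in> V \<Longrightarrow> l y \<in> Fp"
begin

lemma V_closed:
  shows V_add: "y \<in> V \<Longrightarrow> z \<in> V \<Longrightarrow> y + z \<in> V"
    and V_smult: "c \<in> Fp \<Longrightarrow> y \<in> V \<Longrightarrow> c * y \<in> V"
    and V_diff: "y \<in> V \<Longrightarrow> z \<in> V \<Longrightarrow> y - z \<in> V"
    and l_diff: "y \<in> V \<Longrightarrow> z \<in> V \<Longrightarrow> l (y - z) = l y - l z"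
proof -
  have neg1: "- 1 \<in> (Fp :: 'a set)"
    using Fp_uminus[OF cp Fp_1] .
  show add: "y \<in> V \<Longrightarrow> z \<in> V \<Longrightarrow> y + z \<in> V"
    and smult: "c \<in> Fp \<Longrightarrow> y \<in> V \<Longrightarrow> c * y \<in> V" for y z c
    using V_sub unfolding Fp_subspace_def by blast+
  have l_add: "y \<in> V \<Longrightarrow> z \<in> V \<Longrightarrow> l (y + z) = l y + l z"
    and l_smult: "c \<in> Fp \<Longrightarrow> y \<in> V \<Longrightarrow> l (c * y) = c * l y" for y z c
    using l_lin unfolding Fp_linear_on_def by blast+
  assume y: "y \<in> V" and z: "z \<in> V"
  have "y + (- 1) * z \<in> V" and "l (y + (- 1) * z) = l y + (- 1) * l z"
    using add[OF y smult[OF neg1 z]] l_add[OF y smult[OF neg1 z]] l_smult[OF neg1 z] by simp_all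
  then show "y - z \<in> V" and "l (y - z) = l y - l z"
    by simp_all
qed

lemma kernel_finite_additive_subgroup: "finite_additive_subgroup {y \<in> V. l y = 0}"
proof -
  have V0: "0 \<in> V" and fin: "finite V"
    using V_sub unfolding Fp_subspace_def by blast+
  then have "l 0 = 0"
    using l_diff[of 0 0] by simp
  moreover have "a - b \<in> {y \<in> V. l y = 0}" if "a \<in> {y \<in> V. l y = 0}" "b \<in> {y \<in> V. l y = 0}" for a b
    using that V_diff l_diff by simp
  ultimately show ?thesis
    unfolding finite_additive_subgroup_def using V0 fin by simp
qed

lemma kernel_vanishing_poly_root_iff:
  "poly (vanishing_poly {y \<in> V. l y = 0}) x = 0 \<longleftrightarrow> x \<in> V \<and> l x = 0"
  using kernel_finite_additive_subgroup
  by (subst vanishing_poly_root_iff) (auto simp: finite_additive_subgroup_def)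

text \<open>Let L be the vanishing polynomial of ker l.  Since L is Fp-linear with kernel ker l,
  l and L are proportional on V (both factor through the one-dimensional space V / ker l).\<close>

lemma functional_eq_scaled_vanishing_poly:
  assumes y0: "y0 \<in> V" "l y0 \<noteq> 0"
  defines "L \<equiv> vanishing_poly {y \<in> V. l y = 0}"
  shows "\<exists>c. c \<noteq> 0 \<and> (\<forall>y\<in>V. l y = c * poly L y)"
proof -
  note K = kernel_finite_additive_subgroup
  note root_iff = kernel_vanishing_poly_root_iff[folded L_def]
  note L_diff = vanishing_poly_diff[OF K, folded L_def]
  note L_smult = vanishing_poly_Fp_homogeneous[OF K, folded L_def]
  define s where "s = l y0"
  have s_Fp: "s \<in> Fp" and s0: "s \<noteq> 0"
    using l_Fp y0 unfolding s_def by auto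
  have a0: "poly L y0 \<noteq> 0"
    using root_iff[of y0] y0 by simp
  have l_eq: "l y = (s / poly L y0) * poly L y" if y: "y \<in> V" for y
  proof -
    define t where "t = l y"
    have t_Fp: "t \<in> Fp"
      using l_Fp y unfolding t_def by simp
    define y' where "y' = s * y - t * y0"
    have "y' \<in> V"
      unfolding y'_def using V_diff V_smult s_Fp t_Fp y y0 by blast
    moreover have "l y' = s * t - t * s"
      unfolding y'_def using l_diff V_smult l_lin s_Fp t_Fp y y0
      unfolding Fp_linear_on_def s_def t_def by simp
    ultimately have "poly L y' = 0"
      using root_iff by (simp add: mult.commute)
    then have "s * poly L y = t * poly L y0"
      unfolding y'_def L_diff L_smult[OF s_Fp] L_smult[OF t_Fp] by simp
    then show ?thesis
      using a0 unfolding t_def by (simp add: field_simps)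
  qed
  moreover have "s / poly L y0 \<noteq> 0"
    using s0 a0 by simp
  ultimately show ?thesis
    by blast
qed

text \<open>V is the full root set of (cL)^p - cL: its elements satisfy it because l takes values
  in Fp; conversely a root x has cL(x) in Fp, so cL(x) = cL(w) for some w in the line
  Fp y0 \<subseteq> V, and x - w lies in ker L \<subseteq> V.\<close>

lemma subspace_eq_frobenius_roots:
  defines "L \<equiv> vanishing_poly {y \<in> V. l y = 0}"
  assumes y0: "y0 \<in> V" "l y0 \<noteq> 0"
    and c0: "c \<noteq> 0" and l_eq: "\<And>y. y \<in> V \<Longrightarrow> l y = c * poly L y"
  shows "V = {x. poly (smult (c ^ CHAR('a)) (L ^ CHAR('a)) - smult c L) x = 0}"
proof -
  note K = kernel_finite_additive_subgroup
  note root_iff = kernel_vanishing_poly_root_iff[folded L_def]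
  note L_diff = vanishing_poly_diff[OF K, folded L_def]
  note L_smult = vanishing_poly_Fp_homogeneous[OF K, folded L_def]
  have root_eq: "poly (smult (c ^ CHAR('a)) (L ^ CHAR('a)) - smult c L) x = 0
      \<longleftrightarrow> c * poly L x \<in> Fp" for x
    by (simp add: Fp_iff_frobenius_fixed[OF cp] poly_power power_mult_distrib)
  show ?thesis
  proof (intro set_eqI iffI)
    fix x assume "x \<in> V"
    then show "x \<in> {x. poly (smult (c ^ CHAR('a)) (L ^ CHAR('a)) - smult c L) x = 0}"
      using root_eq l_eq l_Fp by simp
  next
    fix x assume "x \<in> {x. poly (smult (c ^ CHAR('a)) (L ^ CHAR('a)) - smult c L) x = 0}"
    then have u_Fp: "c * poly L x \<in> Fp"
      using root_eq by simp
    define a where "a = c * poly L x * inverse (l y0)"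
    have a_Fp: "a \<in> Fp"
      unfolding a_def using u_Fp Fp_inverse[OF cp l_Fp[OF y0(1)]] by (rule Fp_mult)
    have w_V: "a * y0 \<in> V"
      using V_smult[OF a_Fp y0(1)] .
    have "c * poly L (a * y0) = a * l y0"
      using L_smult[OF a_Fp] l_eq[OF y0(1)] by simp
    also have "\<dots> = c * poly L x"
      unfolding a_def using y0(2) by simp
    finally have "poly L (x - a * y0) = 0"
      using c0 L_diff by simp
    then have "x - a * y0 \<in> V"
      using root_iff by simp
    then show "x \<in> V"
      using V_add[OF _ w_V] by fastforce
  qed
qed

end

theorem proposition2p9:
  fixes p n :: nat
    and V :: "'a::field set"
    and f :: "nat \<Rightarrow> 'a poly"
    and m :: "nat \<Rightarrow> nat"
    and ell :: "nat \<Rightarrow> nat \<Rightarrow> 'a \<Rightarrow> 'a"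
  assumes alg_closed: "alg_closed_field TYPE('a)"
    and char: "CHAR('a) = p" and p_prime: "prime p"
    and n_ge: "n \<ge> 2"
    and V_sub: "Fp_subspace V"
    and f_reduced: "\<And>i. i \<in> {1..n} \<Longrightarrow> reduced (f i)"
    and m_def: "\<And>i. i \<in> {1..n} \<Longrightarrow> m i = deg_bar (f i) \<and> degree (f i) = m i"
    and m_ndvd: "\<And>i. i \<in> {1..n} \<Longrightarrow> \<not> p dvd m i"
    and m_mono: "\<And>i j. i \<in> {1..n} \<Longrightarrow> j \<in> {1..n} \<Longrightarrow> i \<le> j \<Longrightarrow> m i \<le> m j"
    and deg_comb: "\<And>\<mu>. (\<forall>i\<in>{1..n}. \<mu> i \<in> Fp) \<Longrightarrow> (\<exists>i\<in>{1..n}. \<mu> i \<noteq> 0) \<Longrightarrow>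
        deg_bar (\<Sum>i=1..n. smult (\<mu> i) (f i)) = Max {m i | i. i \<in> {1..n} \<and> \<mu> i \<noteq> 0}"
    and ell_Fp: "\<And>j i y. y \<in> V \<Longrightarrow> 1 \<le> j \<Longrightarrow> j < i \<Longrightarrow> i \<le> n \<Longrightarrow> ell j i y \<in> Fp"
    and translation: "\<And>y i. y \<in> V \<Longrightarrow> i \<in> {1..n} \<Longrightarrow>
        cong_wp (pcompose (f i) [:y, 1:] - f i) (\<Sum>j=1..<i. smult (ell j i y) (f j))"
  shows "(\<forall>i\<in>{1..<n}. Fp_linear_on V (ell i (i + 1)))
       \<and> (\<forall>i\<in>{1..<n}. (\<exists>y\<in>V. ell i (i + 1) y \<noteq> 0) \<longrightarrow>
            (let K = {y \<in> V. ell i (i + 1) y = 0};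
                 L = (\<Prod>y\<in>K. [:- y, 1:])
             in \<exists>c. c \<noteq> 0 \<and> (\<forall>y\<in>V. ell i (i + 1) y = c * poly L y)
                   \<and> V = {x. poly (smult (c ^ p) (L ^ p) - smult c L) x = 0}))"
proof -
  have cp: "prime CHAR('a)"
    using char p_prime by simp
  have linear: "Fp_linear_on V (ell i (i + 1))" if i: "i \<in> {1..<n}" for i
    using ell_additive[OF cp V_sub _ deg_comb ell_Fp translation] m_ndvd char i
    by (intro additive_imp_Fp_linear_on[OF V_sub]) auto
  have proportional: "\<exists>c. c \<noteq> 0 \<and> (\<forall>y\<in>V. ell i (i + 1) y = c * poly L y)
      \<and> V = {x. poly (smult (c ^ p) (L ^ p) - smult c L) x = 0}"
    if i: "i \<in> {1..<n}" and y0: "y0 \<in> V" "ell i (i + 1) y0 \<noteq> 0"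
      and L: "L = vanishing_poly {y \<in> V. ell i (i + 1) y = 0}" for i y0 L
  proof -
    have l_Fp: "\<And>y. y \<in> V \<Longrightarrow> ell i (i + 1) y \<in> Fp"
      using ell_Fp i by auto
    obtain c where c0: "c \<noteq> 0" and l_eq: "\<forall>y\<in>V. ell i (i + 1) y = c * poly L y"
      using functional_eq_scaled_vanishing_poly[OF cp V_sub linear[OF i] l_Fp y0] L by blast
    then show ?thesis
      using subspace_eq_frobenius_roots[OF cp V_sub linear[OF i] l_Fp y0 c0] L l_eq char by auto
  qed
  show ?thesis
  proof (intro conjI ballI impI)
    fix i assume "i \<in> {1..<n}"
    then show "Fp_linear_on V (ell i (i + 1))"
      by (rule linear)
  next
    fix i assume i: "i \<in> {1..<n}" and "\<exists>y\<in>V. ell i (i + 1) y \<noteq> 0"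
    then obtain y0 where y0: "y0 \<in> V" "ell i (i + 1) y0 \<noteq> 0"
      by blast
    show "let K = {y \<in> V. ell i (i + 1) y = 0}; L = \<Prod>y\<in>K. [:- y, 1:]
        in \<exists>c. c \<noteq> 0 \<and> (\<forall>y\<in>V. ell i (i + 1) y = c * poly L y)
             \<and> V = {x. poly (smult (c ^ p) (L ^ p) - smult c L) x = 0}"
      using proportional[OF i y0 refl] unfolding Let_def vanishing_poly_def .
  qed
qed

end
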